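(* Let $E$ be a Banach lattice. If $E$ has the unbounded Grothendieck property (UGP), then $E$ has the disjoint Grothendieck property (DGP); and if $E$ has the DGP, then $E$ has the weak Grothendieck property (WGP).
   Context: Let $E$ be a Banach lattice with (norm) dual $E'$. Elements $x',y'\in E'$ are disjoint if $|x'|\wedge|y'|=0$; a sequence is disjoint if its terms are pairwise disjoint. A sequence $(x_n')\subseteq E'$ is unbounded weak$^*$ convergent to $x'\in E'$ (written $x_n'\xrightarrow{uaw^*}x'$) if $|x_n'-x'|\wedge u'\to 0$ in the weak$^*$ topology $\sigma(E',E)$ for every $u'\in E'_+$. $E$ has the WGP if every disjoint sequence $(x_n')\subseteq E'$ with $x_n'\to 0$ weak$^*$ satisfies $x_n'\to 0$ weakly (i.e. in $\sigma(E',E'')$). $E$ has the DGP if every norm bounded disjoint sequence $(x_n')\subseteq E'$ satisfies $x_n'\to 0$ weakly. $E$ has the UGP if every norm bounded sequence $(x_n')\subseteq E'$ with $x_n'\xrightarrow{uaw^*}0$ satisfies $x_n'\to0$ weakly. *)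

theory Defs
  imports "HOL-Analysis.Analysis"
begin

class banach_lattice = banach + ordered_real_vector + lattice +
  assumes lattice_norm:
    "sup x (- x) \<le> sup y (- y) \<Longrightarrow> norm x \<le> norm y"

definition labs :: "'a::banach_lattice \<Rightarrow> 'a" where
  "labs x = sup x (- x)"

definition lpos :: "'a::banach_lattice \<Rightarrow> 'a" where
  "lpos x = sup x 0"

definition lneg :: "'a::banach_lattice \<Rightarrow> 'a" where
  "lneg x = sup (- x) 0"

text \<open>The order of E' is the pointwise order on the positive cone; its lattice
  operations are given by the Riesz--Kantorovich formulas. A positive functional
  is determined by its values on the positive cone and is recovered on all of E
  by x \<mapsto> phi(x+) - phi(x-).\<close>

definition dual_nonneg :: "('a::banach_lattice \<Rightarrow>\<^sub>L real) \<Rightarrow> bool" where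
  "dual_nonneg f \<longleftrightarrow> (\<forall>x. 0 \<le> x \<longrightarrow> 0 \<le> blinfun_apply f x)"

definition dual_abs_cone :: "('a::banach_lattice \<Rightarrow>\<^sub>L real) \<Rightarrow> 'a \<Rightarrow> real" where
  "dual_abs_cone f y = Sup {\<bar>blinfun_apply f z\<bar> | z. labs z \<le> y}"

definition dual_inf_cone :: "('a::banach_lattice \<Rightarrow> real) \<Rightarrow> ('a \<Rightarrow> real) \<Rightarrow> 'a \<Rightarrow> real" where
  "dual_inf_cone h u x = Inf {h y + u (x - y) | y. 0 \<le> y \<and> y \<le> x}"

definition cone_ext :: "('a::banach_lattice \<Rightarrow> real) \<Rightarrow> 'a \<Rightarrow> real" where
  "cone_ext \<phi> x = \<phi> (lpos x) - \<phi> (lneg x)"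

definition dual_disjoint :: "('a::banach_lattice \<Rightarrow>\<^sub>L real) \<Rightarrow> ('a \<Rightarrow>\<^sub>L real) \<Rightarrow> bool" where
  "dual_disjoint f g \<longleftrightarrow>
     (\<forall>x. 0 \<le> x \<longrightarrow> dual_inf_cone (dual_abs_cone f) (dual_abs_cone g) x = 0)"

definition disjoint_seq :: "(nat \<Rightarrow> ('a::banach_lattice \<Rightarrow>\<^sub>L real)) \<Rightarrow> bool" where
  "disjoint_seq xs \<longleftrightarrow> (\<forall>m n. m \<noteq> n \<longrightarrow> dual_disjoint (xs m) (xs n))"

definition weak_star_tendsto :: "(nat \<Rightarrow> ('a::banach_lattice \<Rightarrow>\<^sub>L real)) \<Rightarrow> ('a \<Rightarrow>\<^sub>L real) \<Rightarrow> bool" where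
  "weak_star_tendsto xs l \<longleftrightarrow>
     (\<forall>x. (\<lambda>n. blinfun_apply (xs n) x) \<longlonglongrightarrow> blinfun_apply l x)"

definition weak_tendsto :: "(nat \<Rightarrow> ('a::banach_lattice \<Rightarrow>\<^sub>L real)) \<Rightarrow> ('a \<Rightarrow>\<^sub>L real) \<Rightarrow> bool" where
  "weak_tendsto xs l \<longleftrightarrow>
     (\<forall>\<Phi> :: ('a \<Rightarrow>\<^sub>L real) \<Rightarrow>\<^sub>L real.
        (\<lambda>n. blinfun_apply \<Phi> (xs n)) \<longlonglongrightarrow> blinfun_apply \<Phi> l)"

definition uaw_star_tendsto :: "(nat \<Rightarrow> ('a::banach_lattice \<Rightarrow>\<^sub>L real)) \<Rightarrow> ('a \<Rightarrow>\<^sub>L real) \<Rightarrow> bool" where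
  "uaw_star_tendsto xs l \<longleftrightarrow>
     (\<forall>u. dual_nonneg u \<longrightarrow>
        (\<forall>x. (\<lambda>n. cone_ext (dual_inf_cone (dual_abs_cone (xs n - l)) (blinfun_apply u)) x)
               \<longlonglongrightarrow> 0))"

definition norm_bounded_seq :: "(nat \<Rightarrow> ('a::banach_lattice \<Rightarrow>\<^sub>L real)) \<Rightarrow> bool" where
  "norm_bounded_seq xs \<longleftrightarrow> (\<exists>M. \<forall>n. norm (xs n) \<le> M)"

definition WGP :: "'a::banach_lattice itself \<Rightarrow> bool" where
  "WGP _ \<longleftrightarrow> (\<forall>xs :: nat \<Rightarrow> ('a \<Rightarrow>\<^sub>L real).
      disjoint_seq xs \<and> weak_star_tendsto xs 0 \<longrightarrow> weak_tendsto xs 0)"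

definition DGP :: "'a::banach_lattice itself \<Rightarrow> bool" where
  "DGP _ \<longleftrightarrow> (\<forall>xs :: nat \<Rightarrow> ('a \<Rightarrow>\<^sub>L real).
      norm_bounded_seq xs \<and> disjoint_seq xs \<longrightarrow> weak_tendsto xs 0)"

definition UGP :: "'a::banach_lattice itself \<Rightarrow> bool" where
  "UGP _ \<longleftrightarrow> (\<forall>xs :: nat \<Rightarrow> ('a \<Rightarrow>\<^sub>L real).
      norm_bounded_seq xs \<and> uaw_star_tendsto xs 0 \<longrightarrow> weak_tendsto xs 0)"

end

theory Submission
  imports Defs
begin

(*
  UGP ==> DGP: a disjoint sequence (x_n') is uaw*-null. Fix u' >= 0. By induction on N, the
  partial sum |x_0'| + ... + |x_(N-1)'| is disjoint from |x_N'|, and therefore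
  sum_(n<N) (|x_n'| inf u')(x) <= u'(x) for every x >= 0. So the nonnegative series
  sum_n (|x_n'| inf u')(x) converges and its terms tend to 0. The lattice operations of E'
  are only available on the positive cone, through the Riesz-Kantorovich formulas, which is
  why disjointness is handled in the epsilon form cone_disjoint.

  DGP ==> WGP: a weak*-null sequence is norm bounded by the uniform boundedness principle.
*)

lemma norm_blinfun_le_if_bounded_on_ball:
  fixes f :: "'a::real_normed_vector \<Rightarrow>\<^sub>L 'b::real_normed_vector"
  assumes r: "0 < r" and bound: "\<And>x. x \<in> ball x0 r \<Longrightarrow> norm (f x) \<le> k"
  shows "norm f \<le> 4 * k / r"
proof (rule norm_blinfun_bound)
  have "norm (f x0) \<le> k" using bound r by simp
  then show "0 \<le> 4 * k / r" using r by (simp add: order_trans[OF norm_ge_zero])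
  fix z :: 'a
  show "norm (f z) \<le> 4 * k / r * norm z"
  proof (cases "z = 0")
    case False
    define t where "t = (r / 2) / norm z"
    have t: "0 < t" using r False by (simp add: t_def)
    have "x0 + t *\<^sub>R z \<in> ball x0 r" using r False by (simp add: t_def dist_norm)
    then have "norm (f (x0 + t *\<^sub>R z)) \<le> k" by (rule bound)
    moreover have "norm (f x0) \<le> k" using bound r by simp
    moreover have "t * norm (f z) = norm (f (x0 + t *\<^sub>R z) - f x0)"
      using t by (simp add: blinfun.add_right blinfun.scaleR_right)
    moreover have "norm (f (x0 + t *\<^sub>R z) - f x0) \<le> norm (f (x0 + t *\<^sub>R z)) + norm (f x0)"
      by (rule norm_triangle_ineq4)
    ultimately have "t * norm (f z) \<le> 2 * k" by linarith
    then have "norm (f z) \<le> 2 * k / t" using t by (simp add: field_simps)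
    also have "2 * k / t = 4 * k / r * norm z" using r False by (simp add: t_def field_simps)
    finally show ?thesis .
  qed simp
qed

theorem uniform_boundedness_blinfun:
  fixes f :: "'i \<Rightarrow> ('a::banach \<Rightarrow>\<^sub>L 'b::real_normed_vector)"
  assumes pointwise: "\<And>x. \<exists>B. \<forall>i. norm (f i x) \<le> B"
  shows "\<exists>M. \<forall>i. norm (f i) \<le> M"
proof -
  define A where "A k = {x. \<forall>i. norm (f i x) \<le> real k}" for k :: nat
  have closed_A: "closed (A k)" for k
  proof -
    have "A k = (\<Inter>i. {x. norm (f i x) \<le> real k})" by (auto simp: A_def)
    then show ?thesis by (auto intro!: closed_Collect_le continuous_intros)
  qed
  have cover: "\<Union>(range A) = UNIV"
  proof safe
    fix x
    obtain B where "\<forall>i. norm (f i x) \<le> B" using pointwise by blast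
    moreover obtain k where "B \<le> real k" using real_arch_simple by blast
    ultimately have "x \<in> A k" unfolding A_def using order_trans by blast
    then show "x \<in> \<Union>(range A)" by blast
  qed simp
  have "\<exists>k. interior (A k) \<noteq> {}"
  proof (rule ccontr)
    assume no_interior: "\<not> ?thesis"
    have "euclidean interior_of \<Union>(range A) = {}"
    proof (rule Baire_category_alt)
      show "completely_metrizable_space (euclidean :: 'a topology) \<or>
            locally_compact_space (euclidean :: 'a topology) \<and> regular_space (euclidean :: 'a topology)"
        using completely_metrizable_space_euclidean by blast
      show "closedin euclidean T \<and> euclidean interior_of T = {}" if "T \<in> range A" for T
        using that closed_A no_interior unfolding closed_closedin by auto
    qed simp
    then show False using cover by simp
  qed
  then obtain k x0 where "x0 \<in> interior (A k)" by blast
  then obtain r where r: "0 < r" "ball x0 r \<subseteq> A k"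
    by (meson open_contains_ball open_interior interior_subset subset_trans)
  have "norm (f i) \<le> 4 * real k / r" for i
    using r by (intro norm_blinfun_le_if_bounded_on_ball) (auto simp: A_def)
  then show ?thesis by blast
qed

lemma weak_star_tendsto_imp_norm_bounded_seq:
  fixes xs :: "nat \<Rightarrow> ('a::banach_lattice \<Rightarrow>\<^sub>L real)"
  assumes "weak_star_tendsto xs l"
  shows "norm_bounded_seq xs"
  unfolding norm_bounded_seq_def
proof (rule uniform_boundedness_blinfun)
  fix x
  have "(\<lambda>n. xs n x) \<longlonglongrightarrow> l x" using assms unfolding weak_star_tendsto_def by blast
  then have "Bseq (\<lambda>n. xs n x)" by (intro convergent_imp_Bseq convergentI)
  then show "\<exists>B. \<forall>n. norm (xs n x) \<le> B" unfolding Bseq_def by blast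
qed

lemma labs_eq_self: "0 \<le> (y::'a::banach_lattice) \<Longrightarrow> labs y = y"
  unfolding labs_def by (rule sup_absorb1) (meson neg_le_0_iff_le order_trans)

lemma labs_ge: "(z::'a::banach_lattice) \<le> labs z" "- z \<le> labs z"
  unfolding labs_def by auto

lemma norm_le_if_labs_le: "0 \<le> (y::'a::banach_lattice) \<Longrightarrow> labs z \<le> y \<Longrightarrow> norm z \<le> norm y"
  using lattice_norm[of z y] labs_eq_self[of y] unfolding labs_def by simp

lemma labs_le_0_iff: "labs (z::'a::banach_lattice) \<le> 0 \<longleftrightarrow> z = 0"
proof
  assume h: "labs z \<le> 0"
  have "z \<le> 0" using labs_ge(1)[of z] h by (rule order_trans)
  moreover have "- z \<le> 0" using labs_ge(2)[of z] h by (rule order_trans)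
  ultimately show "z = 0" by (metis antisym neg_le_0_iff_le)
qed (simp add: labs_def)

lemma riesz_decomposition:
  fixes z v1 v2 :: "'a::banach_lattice"
  assumes "0 \<le> v1" "0 \<le> v2" "labs z \<le> v1 + v2"
  obtains z1 z2 where "z = z1 + z2" "labs z1 \<le> v1" "labs z2 \<le> v2"
proof
  define z1 where "z1 = sup (inf z v1) (- v1)"
  have z_le: "z \<le> v1 + v2" "- z \<le> v1 + v2" using labs_ge[of z] assms(3) by auto
  have "z1 \<le> v1" unfolding z1_def using assms(1)
    by (meson inf_le2 neg_le_0_iff_le order_trans sup_least)
  moreover have "- z1 \<le> v1" unfolding z1_def by (meson minus_le_iff sup_ge2)
  ultimately show "labs z1 \<le> v1" by (simp add: labs_def)
  have "z - v2 \<le> inf z v1" using assms(2) z_le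
    by (simp add: diff_le_eq le_add_same_cancel1 add.commute)
  also have "\<dots> \<le> z1" unfolding z1_def by simp
  finally have "z - z1 \<le> v2" by (simp add: diff_le_eq add.commute)
  moreover have "z1 \<le> z + v2"
  proof -
    have "inf z v1 \<le> z + v2" using assms(2) by (meson inf_le1 le_add_same_cancel1 order_trans)
    moreover have "- v1 \<le> z + v2" using add_right_mono[OF z_le(2), of "z - v1"]
      by (simp add: algebra_simps)
    ultimately show ?thesis unfolding z1_def by simp
  qed
  ultimately show "labs (z - z1) \<le> v2" by (simp add: labs_def algebra_simps)
qed simp

lemma dual_abs_cone_ge:
  fixes f :: "'a::banach_lattice \<Rightarrow>\<^sub>L real"
  assumes "0 \<le> y" "labs z \<le> y"
  shows "\<bar>f z\<bar> \<le> dual_abs_cone f y"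
  unfolding dual_abs_cone_def
proof (rule cSup_upper)
  show "\<bar>f z\<bar> \<in> {\<bar>f z\<bar> | z. labs z \<le> y}" using assms(2) by blast
  show "bdd_above {\<bar>f z\<bar> | z. labs z \<le> y}"
  proof (rule bdd_aboveI, clarify)
    fix z assume "labs z \<le> y"
    then have "norm z \<le> norm y" using assms(1) by (intro norm_le_if_labs_le)
    then show "\<bar>f z\<bar> \<le> norm f * norm y"
      using norm_blinfun[of f z] by (metis mult_left_mono norm_ge_zero order_trans real_norm_def)
  qed
qed

lemma dual_abs_cone_le:
  fixes f :: "'a::banach_lattice \<Rightarrow>\<^sub>L real"
  assumes "0 \<le> y" "\<And>z. labs z \<le> y \<Longrightarrow> \<bar>f z\<bar> \<le> B"
  shows "dual_abs_cone f y \<le> B"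
  unfolding dual_abs_cone_def
proof (rule cSup_least)
  have "labs 0 \<le> y" using assms(1) by (simp add: labs_def)
  then show "{\<bar>f z\<bar> | z. labs z \<le> y} \<noteq> {}" by blast
qed (use assms(2) in blast)

lemma dual_abs_cone_nonneg:
  fixes f :: "'a::banach_lattice \<Rightarrow>\<^sub>L real"
  shows "0 \<le> y \<Longrightarrow> 0 \<le> dual_abs_cone f y"
  using dual_abs_cone_ge[of y 0 f] by (simp add: labs_def)

lemma dual_abs_cone_0:
  fixes f :: "'a::banach_lattice \<Rightarrow>\<^sub>L real"
  shows "dual_abs_cone f 0 = 0"
  using dual_abs_cone_le[of 0 f 0] dual_abs_cone_nonneg[of 0 f] by (simp add: labs_le_0_iff)

lemma dual_abs_cone_mono:
  fixes f :: "'a::banach_lattice \<Rightarrow>\<^sub>L real"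
  shows "0 \<le> y \<Longrightarrow> y \<le> y' \<Longrightarrow> dual_abs_cone f y \<le> dual_abs_cone f y'"
  by (rule dual_abs_cone_le) (auto intro!: dual_abs_cone_ge)

lemma dual_abs_cone_subadd:
  fixes f :: "'a::banach_lattice \<Rightarrow>\<^sub>L real"
  assumes "0 \<le> y1" "0 \<le> y2"
  shows "dual_abs_cone f (y1 + y2) \<le> dual_abs_cone f y1 + dual_abs_cone f y2"
proof (rule dual_abs_cone_le)
  show "0 \<le> y1 + y2" using assms by simp
  fix z assume "labs z \<le> y1 + y2"
  then obtain z1 z2 where z: "z = z1 + z2" "labs z1 \<le> y1" "labs z2 \<le> y2"
    using riesz_decomposition assms by blast
  have "\<bar>f z\<bar> \<le> \<bar>f z1\<bar> + \<bar>f z2\<bar>" by (simp add: z blinfun.add_right abs_triangle_ineq)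
  also have "\<dots> \<le> dual_abs_cone f y1 + dual_abs_cone f y2"
    using dual_abs_cone_ge[OF assms(1) z(2)] dual_abs_cone_ge[OF assms(2) z(3)] by (rule add_mono)
  finally show "\<bar>f z\<bar> \<le> dual_abs_cone f y1 + dual_abs_cone f y2" .
qed

lemma dual_inf_cone_le:
  fixes h u :: "'a::banach_lattice \<Rightarrow> real"
  assumes h_nonneg: "\<And>w. 0 \<le> w \<Longrightarrow> 0 \<le> h w" and u_nonneg: "\<And>w. 0 \<le> w \<Longrightarrow> 0 \<le> u w"
    and "0 \<le> w" "w \<le> x"
  shows "dual_inf_cone h u x \<le> h w + u (x - w)"
  unfolding dual_inf_cone_def
proof (rule cInf_lower)
  show "h w + u (x - w) \<in> {h y + u (x - y) | y. 0 \<le> y \<and> y \<le> x}" using assms(3,4) by blast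
  show "bdd_below {h y + u (x - y) | y. 0 \<le> y \<and> y \<le> x}"
    using h_nonneg u_nonneg by (intro bdd_belowI[of _ 0]) (auto simp: add_nonneg_nonneg)
qed

lemma dual_inf_cone_nonneg:
  fixes h u :: "'a::banach_lattice \<Rightarrow> real"
  assumes h_nonneg: "\<And>w. 0 \<le> w \<Longrightarrow> 0 \<le> h w" and u_nonneg: "\<And>w. 0 \<le> w \<Longrightarrow> 0 \<le> u w"
    and "0 \<le> x"
  shows "0 \<le> dual_inf_cone h u x"
  unfolding dual_inf_cone_def
proof (rule cInf_greatest)
  show "{h y + u (x - y) | y. 0 \<le> y \<and> y \<le> x} \<noteq> {}" using assms(3) by blast
qed (use h_nonneg u_nonneg in \<open>auto simp: add_nonneg_nonneg\<close>)

lemma dual_inf_cone_lessE: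
  fixes h u :: "'a::banach_lattice \<Rightarrow> real"
  assumes "0 \<le> x" and "dual_inf_cone h u x < d"
  obtains w where "0 \<le> w" "w \<le> x" "h w + u (x - w) < d"
proof -
  have "{h y + u (x - y) | y. 0 \<le> y \<and> y \<le> x} \<noteq> {}" using assms(1) by blast
  from cInf_lessD[OF this assms(2)[unfolded dual_inf_cone_def]] show ?thesis
    using that by blast
qed

lemma dual_inf_cone_subadd:
  fixes h u :: "'a::banach_lattice \<Rightarrow> real"
  assumes h_nonneg: "\<And>w. 0 \<le> w \<Longrightarrow> 0 \<le> h w" and u_nonneg: "\<And>w. 0 \<le> w \<Longrightarrow> 0 \<le> u w"
    and h_subadd: "\<And>v w. 0 \<le> v \<Longrightarrow> 0 \<le> w \<Longrightarrow> h (v + w) \<le> h v + h w"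
    and u_add: "\<And>v w. u (v + w) = u v + u w"
    and x1: "0 \<le> x1" and x2: "0 \<le> x2"
  shows "dual_inf_cone h u (x1 + x2) \<le> dual_inf_cone h u x1 + dual_inf_cone h u x2"
proof (rule field_le_epsilon)
  fix e :: real assume "0 < e"
  obtain w1 where w1: "0 \<le> w1" "w1 \<le> x1" "h w1 + u (x1 - w1) < dual_inf_cone h u x1 + e / 2"
    using dual_inf_cone_lessE[OF x1] \<open>0 < e\<close> by (metis less_add_same_cancel1 half_gt_zero)
  obtain w2 where w2: "0 \<le> w2" "w2 \<le> x2" "h w2 + u (x2 - w2) < dual_inf_cone h u x2 + e / 2"
    using dual_inf_cone_lessE[OF x2] \<open>0 < e\<close> by (metis less_add_same_cancel1 half_gt_zero)
  have "dual_inf_cone h u (x1 + x2) \<le> h (w1 + w2) + u (x1 + x2 - (w1 + w2))"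
    using w1 w2 by (intro dual_inf_cone_le[OF h_nonneg u_nonneg] add_nonneg_nonneg add_mono)
  also have "x1 + x2 - (w1 + w2) = (x1 - w1) + (x2 - w2)" by (simp add: algebra_simps)
  also have "h (w1 + w2) + u ((x1 - w1) + (x2 - w2)) \<le> (h w1 + u (x1 - w1)) + (h w2 + u (x2 - w2))"
    using h_subadd[OF w1(1) w2(1)] u_add[of "x1 - w1" "x2 - w2"] by simp
  finally show "dual_inf_cone h u (x1 + x2) \<le> dual_inf_cone h u x1 + dual_inf_cone h u x2 + e"
    using w1(3) w2(3) by linarith
qed

text \<open>The vanishing of \<open>dual_inf_cone h c\<close> on the cone, phrased without Inf so that no
  boundedness of h or c is needed.\<close>

definition cone_disjoint :: "('a::banach_lattice \<Rightarrow> real) \<Rightarrow> ('a \<Rightarrow> real) \<Rightarrow> bool" where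
  "cone_disjoint h c \<longleftrightarrow> (\<forall>y\<ge>0. \<forall>d>0. \<exists>v. 0 \<le> v \<and> v \<le> y \<and> h v + c (y - v) < d)"

lemma dual_disjoint_imp_cone_disjoint:
  fixes f g :: "'a::banach_lattice \<Rightarrow>\<^sub>L real"
  assumes "dual_disjoint f g"
  shows "cone_disjoint (dual_abs_cone f) (dual_abs_cone g)"
  unfolding cone_disjoint_def
proof (intro allI impI)
  fix y :: 'a and d :: real assume "0 \<le> y" "0 < d"
  with assms have "dual_inf_cone (dual_abs_cone f) (dual_abs_cone g) y < d"
    unfolding dual_disjoint_def by simp
  with \<open>0 \<le> y\<close> show "\<exists>v. 0 \<le> v \<and> v \<le> y \<and> dual_abs_cone f v + dual_abs_cone g (y - v) < d"
    by (blast elim: dual_inf_cone_lessE)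
qed

lemma cone_disjoint_add:
  fixes h1 h2 c :: "'a::banach_lattice \<Rightarrow> real"
  assumes disj1: "cone_disjoint h1 c" and disj2: "cone_disjoint h2 c"
    and h1_mono: "\<And>v w. 0 \<le> v \<Longrightarrow> v \<le> w \<Longrightarrow> h1 v \<le> h1 w"
    and c_subadd: "\<And>v w. 0 \<le> v \<Longrightarrow> 0 \<le> w \<Longrightarrow> c (v + w) \<le> c v + c w"
  shows "cone_disjoint (\<lambda>v. h1 v + h2 v) c"
  unfolding cone_disjoint_def
proof (intro allI impI)
  fix y :: 'a and d :: real assume "0 \<le> y" "0 < d"
  then obtain w where w: "0 \<le> w" "w \<le> y" "h1 w + c (y - w) < d / 2"
    using disj1 unfolding cone_disjoint_def by (meson half_gt_zero)
  then obtain w' where w': "0 \<le> w'" "w' \<le> w" "h2 w' + c (w - w') < d / 2"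
    using disj2 \<open>0 < d\<close> unfolding cone_disjoint_def by (meson half_gt_zero)
  have "c (y - w') \<le> c (y - w) + c (w - w')"
    using c_subadd[of "y - w" "w - w'"] w w' by simp
  moreover have "h1 w' \<le> h1 w" using h1_mono w' by blast
  ultimately show "\<exists>v. 0 \<le> v \<and> v \<le> y \<and> h1 v + h2 v + c (y - v) < d"
    using w w' by (intro exI[of _ w']) auto
qed

lemma cone_disjoint_sum:
  fixes a :: "nat \<Rightarrow> 'a::banach_lattice \<Rightarrow> real"
  assumes mono: "\<And>n v w. 0 \<le> v \<Longrightarrow> v \<le> w \<Longrightarrow> a n v \<le> a n w"
    and subadd: "\<And>n v w. 0 \<le> v \<Longrightarrow> 0 \<le> w \<Longrightarrow> a n (v + w) \<le> a n v + a n w"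
    and zero: "\<And>n. a n 0 = 0"
    and disjoint: "\<And>m n. n < m \<Longrightarrow> cone_disjoint (a n) (a m)"
  shows "N \<le> m \<Longrightarrow> cone_disjoint (\<lambda>v. \<Sum>n<N. a n v) (a m)"
proof (induction N)
  case 0
  show ?case unfolding cone_disjoint_def using zero by (auto intro!: exI[of _ y for y])
next
  case (Suc N)
  have "cone_disjoint (\<lambda>v. (\<Sum>n<N. a n v) + a N v) (a m)"
  proof (rule cone_disjoint_add)
    show "cone_disjoint (\<lambda>v. \<Sum>n<N. a n v) (a m)" using Suc by simp
    show "cone_disjoint (a N) (a m)" using Suc.prems by (intro disjoint) simp
  qed (use mono subadd in \<open>auto intro: sum_mono\<close>)
  then show ?case by simp
qed

lemma sum_dual_inf_cone_le:
  fixes a :: "nat \<Rightarrow> 'a::banach_lattice \<Rightarrow> real" and u :: "'a \<Rightarrow>\<^sub>L real"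
  assumes nonneg: "\<And>n w. 0 \<le> w \<Longrightarrow> 0 \<le> a n w"
    and subadd: "\<And>n v w. 0 \<le> v \<Longrightarrow> 0 \<le> w \<Longrightarrow> a n (v + w) \<le> a n v + a n w"
    and disjoint: "\<And>N. cone_disjoint (\<lambda>v. \<Sum>n<N. a n v) (a N)"
    and u: "dual_nonneg u"
  shows "0 \<le> x \<Longrightarrow> (\<Sum>n<N. dual_inf_cone (a n) u x) \<le> u x"
proof (induction N arbitrary: x)
  case 0
  then show ?case using u by (simp add: dual_nonneg_def)
next
  case (Suc N)
  let ?g = "\<lambda>n. dual_inf_cone (a n) u"
  have u_nonneg: "\<And>w. 0 \<le> w \<Longrightarrow> 0 \<le> u w" using u by (simp add: dual_nonneg_def)
  have g_le: "?g n y \<le> a n w + u (y - w)" if "0 \<le> w" "w \<le> y" for n w y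
    using nonneg[where n = n] u_nonneg that by (rule dual_inf_cone_le)
  have g_subadd: "?g n (v + w) \<le> ?g n v + ?g n w" if "0 \<le> v" "0 \<le> w" for n v w
    using nonneg[where n = n] u_nonneg subadd[where n = n] blinfun.add_right that by (rule dual_inf_cone_subadd)
  show ?case
  proof (rule field_le_epsilon)
    fix e :: real assume "0 < e"
    obtain v where v: "0 \<le> v" "v \<le> x" "(\<Sum>n<N. a n v) + a N (x - v) < e"
      using disjoint[of N] Suc.prems \<open>0 < e\<close> unfolding cone_disjoint_def by blast
    have xv: "0 \<le> x - v" using v by simp
    have "(\<Sum>n<N. ?g n x) \<le> (\<Sum>n<N. ?g n (x - v) + ?g n v)"
      using g_subadd[OF xv v(1)] by (intro sum_mono) simp
    also have "\<dots> = (\<Sum>n<N. ?g n (x - v)) + (\<Sum>n<N. ?g n v)" by (rule sum.distrib)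
    also have "\<dots> \<le> u (x - v) + (\<Sum>n<N. a n v)"
      using Suc.IH[OF xv] g_le[OF v(1) order_refl] by (intro add_mono sum_mono) auto
    finally have "(\<Sum>n<N. ?g n x) \<le> u (x - v) + (\<Sum>n<N. a n v)" .
    moreover have "?g N x \<le> a N (x - v) + u v" using g_le[OF xv, of x N] v by simp
    moreover have "u (x - v) + u v = u x" by (simp add: blinfun.diff_right)
    ultimately show "(\<Sum>n<Suc N. ?g n x) \<le> u x + e" using v(3) by simp
  qed
qed

lemma disjoint_seq_imp_uaw_star_tendsto_0:
  fixes xs :: "nat \<Rightarrow> ('a::banach_lattice \<Rightarrow>\<^sub>L real)"
  assumes "disjoint_seq xs"
  shows "uaw_star_tendsto xs 0"
  unfolding uaw_star_tendsto_def
proof (intro allI impI)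
  fix u :: "'a \<Rightarrow>\<^sub>L real" and x :: 'a
  assume u: "dual_nonneg u"
  define g where "g n = dual_inf_cone (dual_abs_cone (xs n)) u" for n
  have "(\<lambda>n. g n y) \<longlonglongrightarrow> 0" if "0 \<le> y" for y
  proof (rule summable_LIMSEQ_zero, rule summableI_nonneg_bounded)
    show "0 \<le> g n y" for n
      unfolding g_def using u that
      by (intro dual_inf_cone_nonneg dual_abs_cone_nonneg) (auto simp: dual_nonneg_def)
    have "cone_disjoint (\<lambda>v. \<Sum>n<N. dual_abs_cone (xs n) v) (dual_abs_cone (xs N))" for N
      using assms
      by (intro cone_disjoint_sum dual_abs_cone_mono dual_abs_cone_subadd dual_abs_cone_0)
         (auto simp: disjoint_seq_def intro: dual_disjoint_imp_cone_disjoint)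
    then show "(\<Sum>n<N. g n y) \<le> u y" for N
      unfolding g_def using u that
      by (intro sum_dual_inf_cone_le dual_abs_cone_nonneg dual_abs_cone_subadd)
  qed
  moreover have "0 \<le> lpos x" "0 \<le> lneg x" by (simp_all add: lpos_def lneg_def)
  ultimately have "(\<lambda>n. g n (lpos x) - g n (lneg x)) \<longlonglongrightarrow> 0 - 0" by (intro tendsto_diff)
  then show "(\<lambda>n. cone_ext (dual_inf_cone (dual_abs_cone (xs n - 0)) u) x) \<longlonglongrightarrow> 0"
    by (simp add: cone_ext_def g_def)
qed

theorem lemma2p2:
  shows "(UGP TYPE('a::banach_lattice) \<longrightarrow> DGP TYPE('a)) \<and> (DGP TYPE('a) \<longrightarrow> WGP TYPE('a))"
proof (intro conjI impI)
  assume "UGP TYPE('a)"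
  then show "DGP TYPE('a)"
    unfolding UGP_def DGP_def using disjoint_seq_imp_uaw_star_tendsto_0 by blast
next
  assume "DGP TYPE('a)"
  then show "WGP TYPE('a)"
    unfolding DGP_def WGP_def using weak_star_tendsto_imp_norm_bounded_seq by blast
qed

end
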